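(* Consider the Qs predictor with queue capacity $1$ processing an arbitrary sequence of items $o^{(1)},o^{(2)},\dots$, with probability estimate $Q^{(t)}(i)=1/Y_i^{(t)}$ for every item $i$ that has a counter at time $t$. Then at every time $t\ge2$: (1) for every item $i$ with a counter, $Y_i^{(t)}=1$ if $i=o^{(t-1)}$, and otherwise $Y_i^{(t)}=Y_i^{(t-1)}+1$; (2) there is exactly one item with $Y_i^{(t)}=1$ (equivalently $Q^{(t)}(i)=1$), namely $o^{(t-1)}$, and for every integer $k\ge2$ there is at most one item with $Y_i^{(t)}=k$ (equivalently $Q^{(t)}(i)=1/k$); (3) for every threshold $p>0$, $N(Q^{(t)},p)<1/p$, where $N(Q,p):=|\{i: Q(i)>p\}|$.
   Context: The Qs predictor with queue capacity $1$ keeps, for each item it has observed, a single counter. At each time $t$ (after predicting), it observes $o^{(t)}$ and updates: the counter of $o^{(t)}$ is set to $1$ (created if absent), and the counter of every other item already having a counter is incremented by $1$; no counters are removed. $Y_i^{(t)}$ denotes the value of item $i$'s counter at time $t$, i.e. after the update at time $t-1$ and before the update at time $t$. Items without a counter have estimate $0$. *)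

theory Defs
  imports Complex_Main
begin

text \<open>None = item has no counter.\<close>
definition qs_update :: "('a \<Rightarrow> nat option) \<Rightarrow> 'a \<Rightarrow> ('a \<Rightarrow> nat option)" where
  "qs_update Y x = (\<lambda>i. if i = x then Some 1 else map_option Suc (Y i))"

text \<open>qs_Y obs t = counters at time t (t \<ge> 1), i.e. after the updates with
  obs 1, ..., obs (t-1); at time 1 there are no counters. obs 0 is unused.\<close>
fun qs_Y :: "(nat \<Rightarrow> 'a) \<Rightarrow> nat \<Rightarrow> ('a \<Rightarrow> nat option)" where
  "qs_Y obs 0 = (\<lambda>_. None)"
| "qs_Y obs (Suc 0) = (\<lambda>_. None)"
| "qs_Y obs (Suc (Suc t)) = qs_update (qs_Y obs (Suc t)) (obs (Suc t))"

definition qs_Q :: "(nat \<Rightarrow> 'a) \<Rightarrow> nat \<Rightarrow> 'a \<Rightarrow> real" where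
  "qs_Q obs t i = (case qs_Y obs t i of None \<Rightarrow> 0 | Some y \<Rightarrow> 1 / real y)"

definition N_above :: "('a \<Rightarrow> real) \<Rightarrow> real \<Rightarrow> nat" where
  "N_above Q p = card {i. Q i > p}"

end

theory Submission
  imports Defs
begin

text \<open>Since every observation resets its own counter to 1 and all counters then grow in
  lockstep, a counter of value k at time t belongs to the item observed at time t - k.
  Hence distinct items carry distinct counters, and the items with estimate above p are
  among the observations obs (t - k) with 1 \<le> k < 1/p, of which there are fewer than 1/p.\<close>

lemma qs_Y_Suc: "0 < t \<Longrightarrow> qs_Y obs (Suc t) = qs_update (qs_Y obs t) (obs t)"
  by (cases t) simp_all

lemma qs_Y_SomeD:
  assumes "qs_Y obs t i = Some k"
  shows "0 < k \<and> k < t \<and> i = obs (t - k)"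
  using assms
proof (induction obs t arbitrary: k rule: qs_Y.induct)
  case (3 obs t)
  show ?case
  proof (cases "i = obs (Suc t)")
    case True
    with "3.prems" show ?thesis by (auto simp: qs_update_def)
  next
    case False
    with "3.prems" obtain k' where "qs_Y obs (Suc t) i = Some k'" and "k = Suc k'"
      by (auto simp: qs_update_def)
    with "3.IH" show ?thesis by auto
  qed
qed simp_all

lemma qs_Y_Some_inj: "qs_Y obs t i = Some k \<Longrightarrow> qs_Y obs t j = Some k \<Longrightarrow> i = j"
  using qs_Y_SomeD by metis

lemma qs_Q_above_subset:
  assumes "0 < p"
  shows "{i. p < qs_Q obs t i} \<subseteq> (\<lambda>k. obs (t - k)) ` {k. 0 < k \<and> real k < 1 / p}"
proof
  fix i assume "i \<in> {i. p < qs_Q obs t i}"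
  then obtain k where k: "qs_Y obs t i = Some k" and "p < 1 / real k"
    using assms by (auto simp: qs_Q_def split: option.splits)
  have "0 < k" and "i = obs (t - k)"
    using qs_Y_SomeD[OF k] by auto
  have "real k < 1 / p"
    using \<open>p < 1 / real k\<close> \<open>0 < k\<close> assms by (simp add: field_simps)
  with \<open>0 < k\<close> \<open>i = obs (t - k)\<close>
  show "i \<in> (\<lambda>k. obs (t - k)) ` {k. 0 < k \<and> real k < 1 / p}"
    by blast
qed

lemma card_pos_nat_below:
  fixes c :: real
  assumes "0 < c"
  shows "finite {k::nat. 0 < k \<and> real k < c}"
    and "real (card {k::nat. 0 < k \<and> real k < c}) < c"
proof -
  have sub: "{k::nat. 0 < k \<and> real k < c} \<subseteq> {1..<nat \<lceil>c\<rceil>}"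
  proof
    fix k assume "k \<in> {k::nat. 0 < k \<and> real k < c}"
    then have "0 < k" and "int k < \<lceil>c\<rceil>"
      by (auto simp: less_ceiling_iff)
    then show "k \<in> {1..<nat \<lceil>c\<rceil>}" by auto
  qed
  then show "finite {k::nat. 0 < k \<and> real k < c}"
    using finite_subset by blast
  then have "card {k::nat. 0 < k \<and> real k < c} \<le> nat \<lceil>c\<rceil> - 1"
    using card_mono[OF _ sub] by simp
  moreover have "real (nat \<lceil>c\<rceil> - 1) < c"
    using assms by linarith
  ultimately show "real (card {k::nat. 0 < k \<and> real k < c}) < c"
    by linarith
qed

lemma qs_N_above_lt:
  assumes "0 < p"
  shows "finite {i. p < qs_Q obs t i}" and "real (N_above (qs_Q obs t) p) < 1 / p"
proof -
  let ?K = "{k::nat. 0 < k \<and> real k < 1 / p}"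
  have fin: "finite ?K" and card: "real (card ?K) < 1 / p"
    using card_pos_nat_below assms by simp_all
  note sub = qs_Q_above_subset[OF assms, of obs t]
  show "finite {i. p < qs_Q obs t i}"
    using finite_subset[OF sub] fin by blast
  have "card {i. p < qs_Q obs t i} \<le> card ?K"
    using card_mono[OF finite_imageI[OF fin] sub] card_image_le[OF fin] le_trans by blast
  with card show "real (N_above (qs_Q obs t) p) < 1 / p"
    unfolding N_above_def by linarith
qed

theorem lemma12:
  fixes obs :: "nat \<Rightarrow> 'a" and t :: nat
  assumes "t \<ge> 2"
  shows "(\<forall>i. qs_Y obs t i \<noteq> None \<longrightarrow>
            (i = obs (t - 1) \<longrightarrow> qs_Y obs t i = Some 1) \<and>
            (i \<noteq> obs (t - 1) \<longrightarrow>
               (\<exists>y. qs_Y obs (t - 1) i = Some y \<and> qs_Y obs t i = Some (y + 1))))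
       \<and> {i. qs_Y obs t i = Some 1} = {obs (t - 1)}
       \<and> (\<forall>k::nat. k \<ge> 2 \<longrightarrow>
            (\<forall>i j. qs_Y obs t i = Some k \<and> qs_Y obs t j = Some k \<longrightarrow> i = j))
       \<and> (\<forall>p::real. p > 0 \<longrightarrow>
            finite {i. qs_Q obs t i > p} \<and> real (N_above (qs_Q obs t) p) < 1 / p)"
proof -
  have upd: "qs_Y obs t = qs_update (qs_Y obs (t - 1)) (obs (t - 1))"
    using assms qs_Y_Suc[of "t - 1" obs] by simp
  have no_zero: "qs_Y obs s i \<noteq> Some 0" for s i
    using qs_Y_SomeD by fastforce
  have step: "\<forall>i. qs_Y obs t i \<noteq> None \<longrightarrow>
          (i = obs (t - 1) \<longrightarrow> qs_Y obs t i = Some 1) \<and>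
          (i \<noteq> obs (t - 1) \<longrightarrow>
             (\<exists>y. qs_Y obs (t - 1) i = Some y \<and> qs_Y obs t i = Some (y + 1)))"
    unfolding upd qs_update_def by auto
  have ones: "{i. qs_Y obs t i = Some 1} = {obs (t - 1)}"
    unfolding upd qs_update_def by (auto simp: no_zero)
  show ?thesis
    using step ones qs_Y_Some_inj[of obs t] qs_N_above_lt[of _ obs t] by blast
qed

end
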